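(* Let $n>1$, $I$ an index set, $S,T\in GL(n+1,\mathbb C)$, and for $r\in I$ let $P_r=S\,\mathrm{diag}\{p_{1r},\dots,p_{n+1,r}\}S^{-1}$, $Q_r=T\,\mathrm{diag}\{q_{1r},\dots,q_{n+1,r}\}T^{-1}$ (all entries nonzero), and assume that for every $r\in I$ the sets $\{\ln\frac{p_{kr}}{p_{n+1,r}}\}_{k=1}^n$ and $\{\ln\frac{q_{kr}}{q_{n+1,r}}\}_{k=1}^n$ are simple. There exists a biholomorphic map $f\colon\mathbb CP^n\to\mathbb CP^n$ with $f(P_rv)=Q_rf(v)$ for all $v\in\mathbb CP^n$, $r\in I$, if and only if there exists a permutation $\varrho$ of $\{1,\dots,n+1\}$ such that $\dfrac{q_{\varrho(k)r}}{q_{\varrho(n+1)r}}=\dfrac{p_{kr}}{p_{n+1,r}}$ for all $r\in I$, $k=1,\dots,n$.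
   Context: A matrix $P\in GL(n+1,\mathbb C)$ acts on $\mathbb CP^n$ by the induced projective transformation. $\ln$ is the principal branch. A set $\{\lambda_1,\dots,\lambda_n\}$ of nonzero complex numbers is simple if for all $k\neq l$, $\lambda_k/\lambda_l\notin\{s,1/s:s\in\mathbb N\}$. *)

theory Defs
  imports "HOL-Analysis.Analysis"
begin

text \<open>Points of complex projective space: nonzero vectors of complex^'n modulo
  nonzero complex scalars.  CP^n corresponds to CARD('n) = n+1.\<close>

definition projrel :: "complex^'n \<Rightarrow> complex^'n \<Rightarrow> bool" where
  "projrel v w \<longleftrightarrow> v \<noteq> 0 \<and> w \<noteq> 0 \<and> (\<exists>c. c \<noteq> 0 \<and> w = c *s v)"

lemma part_equivp_projrel: "part_equivp projrel"
proof (rule part_equivpI)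
  have "projrel (axis undefined 1) (axis undefined 1)"
    unfolding projrel_def by (auto intro!: exI[of _ 1] simp: axis_eq_0_iff)
  then show "\<exists>x. projrel x x" by blast
  show "symp projrel"
  proof (rule sympI)
    fix v w assume "projrel v w"
    then obtain c where "v \<noteq> 0" "w \<noteq> 0" "c \<noteq> 0" "w = c *s v"
      unfolding projrel_def by blast
    then have "v = inverse c *s w" by (simp add: vector_smult_assoc)
    then show "projrel w v" unfolding projrel_def
      using \<open>v \<noteq> 0\<close> \<open>w \<noteq> 0\<close> \<open>c \<noteq> 0\<close> by auto
  qed
  show "transp projrel"
  proof (rule transpI)
    fix u v w assume "projrel u v" "projrel v w"
    then obtain c d where "u \<noteq> 0" "w \<noteq> 0" "c \<noteq> 0" "d \<noteq> 0" "v = c *s u" "w = d *s v"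
      unfolding projrel_def by blast
    then have "w = (d * c) *s u" by (simp add: vector_smult_assoc)
    then show "projrel u w" unfolding projrel_def
      using \<open>u \<noteq> 0\<close> \<open>w \<noteq> 0\<close> \<open>c \<noteq> 0\<close> \<open>d \<noteq> 0\<close> by auto
  qed
qed

quotient_type 'n cproj = "complex^'n" / partial: projrel
  by (rule part_equivp_projrel)

definition proj_act :: "complex^('n::finite)^'n \<Rightarrow> 'n cproj \<Rightarrow> 'n cproj" where
  "proj_act P x = abs_cproj (P *v rep_cproj x)"

definition diag_mat :: "(('n::finite) \<Rightarrow> complex) \<Rightarrow> complex^'n^'n" where
  "diag_mat d = (\<chi> i j. if i = j then d i else 0)"

definition cholo_on :: "(complex^('n::finite) \<Rightarrow> complex^('m::finite)) \<Rightarrow> (complex^'n) set \<Rightarrow> bool" where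
  "cholo_on F U \<longleftrightarrow> (\<forall>w\<in>U. \<exists>L. (F has_derivative L) (at w) \<and> (\<forall>c x. L (c *s x) = c *s L x))"

text \<open>A map CP^n \<rightarrow> CP^n is holomorphic iff near every point of C^{n+1}-{0} it lifts
  (through the projection C^{n+1}-{0} \<rightarrow> CP^n) to a holomorphic map into C^{n+1}-{0}.\<close>
definition proj_holomorphic :: "(('n::finite) cproj \<Rightarrow> 'n cproj) \<Rightarrow> bool" where
  "proj_holomorphic f \<longleftrightarrow> (\<forall>v::complex^('n::finite). v \<noteq> 0 \<longrightarrow>
     (\<exists>U F. open U \<and> v \<in> U \<and> 0 \<notin> U \<and> cholo_on F U \<and>
        (\<forall>w\<in>U. F w \<noteq> 0 \<and> abs_cproj (F w) = f (abs_cproj w))))"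

definition proj_biholomorphic :: "(('n::finite) cproj \<Rightarrow> 'n cproj) \<Rightarrow> bool" where
  "proj_biholomorphic f \<longleftrightarrow> bij f \<and> proj_holomorphic f \<and> proj_holomorphic (inv f)"

definition simple_family :: "('k \<Rightarrow> complex) \<Rightarrow> 'k set \<Rightarrow> bool" where
  "simple_family lam K \<longleftrightarrow> (\<forall>k\<in>K. lam k \<noteq> 0) \<and>
     (\<forall>k\<in>K. \<forall>l\<in>K. k \<noteq> l \<longrightarrow>
        (\<forall>s::nat. s \<ge> 1 \<longrightarrow> lam k / lam l \<noteq> of_nat s \<and> lam k / lam l \<noteq> 1 / of_nat s))"

end

theory Submission
  imports Defs
begin

(*
  Conjugacy of families of diagonalisable projective transformations (Theorem 6.8).
  The argument works in every dimension.

  Backward direction: if the eigenvalue ratios of Q_r are those of P_r permuted by rho,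
  then the linear map M = T Pi_rho S^-1 (Pi_rho the permutation matrix) satisfies
  Q_r M = c_r M P_r, so the projective transformation induced by M is a biholomorphic
  conjugacy.

  Forward direction: let f be a biholomorphic conjugacy, v = S e_m and F a holomorphic
  lift of f near v with derivative L.  The point [v] is fixed by every P_r, so [F v] is
  fixed by every Q_r; as the eigenvalues of Q_r0 are distinct (simplicity), F v is a
  multiple of some T e_j.  Differentiating the relation "F(P_r w) is parallel to
  Q_r F(w)" at v (lemma lift_linearized_conjugacy) shows that every coordinate l \<noteq> j of
  T^-1 L(S e_k) either vanishes or satisfies q_rl = q_rj p_rk / p_rm.  Because the lift
  of inv f is differentiable too (lemma lift_derivative_fibre), L(S e_k) is not parallel
  to F v for k \<noteq> m, so some such coordinate is nonzero.  This matches every k \<noteq> m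
  with an l \<noteq> j, and simplicity of p_r0 makes the matching a permutation.
*)

lemma projrel_refl_iff: "projrel v v \<longleftrightarrow> v \<noteq> 0"
  unfolding projrel_def by (auto intro!: exI[of _ 1])

lemma abs_cproj_eq_iff:
  assumes "v \<noteq> 0" "w \<noteq> 0"
  shows "abs_cproj v = abs_cproj w \<longleftrightarrow> (\<exists>c. c \<noteq> 0 \<and> w = c *s v)"
proof -
  have "projrel v w \<longleftrightarrow> projrel v v \<and> projrel w w \<and> abs_cproj v = abs_cproj w"
    using Quotient3_rel[OF Quotient3_cproj] by blast
  then show ?thesis using assms by (auto simp: projrel_refl_iff projrel_def)
qed

lemma abs_cproj_parallel:
  assumes "abs_cproj v = abs_cproj w" "v \<noteq> 0" "w \<noteq> 0"
  shows "\<exists>c. w = c *s v"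
  using abs_cproj_eq_iff[OF assms(2,3)] assms(1) by blast

lemma rep_cproj_nonzero: "rep_cproj x \<noteq> 0"
  using Quotient3_rep_reflp[OF Quotient3_cproj] projrel_refl_iff by blast

lemma abs_rep_cproj: "abs_cproj (rep_cproj x) = x"
  using Quotient3_abs_rep[OF Quotient3_cproj] by blast

lemma abs_cproj_smult: "v \<noteq> 0 \<Longrightarrow> c \<noteq> 0 \<Longrightarrow> abs_cproj (c *s v) = abs_cproj v"
  by (subst abs_cproj_eq_iff) (auto simp: vec_eq_iff intro!: exI[of _ "inverse c"])

lemma invertible_mv_nonzero: "invertible (A::complex^'n^'n) \<Longrightarrow> x \<noteq> 0 \<Longrightarrow> A *v x \<noteq> 0"
  using inj_matrix_vector_mult[of A] by (metis injD matrix_vector_mult_0_right)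

lemma matrix_inv_mult:
  assumes "invertible (A::complex^'n^'n)"
  shows "A ** matrix_inv A = mat 1" "matrix_inv A ** A = mat 1"
  using someI_ex[OF assms[unfolded invertible_def]] unfolding matrix_inv_def by auto

lemma matrix_inv_invertible: "invertible (A::complex^'n^'n) \<Longrightarrow> invertible (matrix_inv A)"
  using matrix_inv_mult unfolding invertible_def by blast

lemma matrix_inv_mv:
  assumes "invertible (A::complex^'n^'n)"
  shows "matrix_inv A *v (A *v x) = x" "A *v (matrix_inv A *v x) = x"
  by (simp_all add: matrix_vector_mul_assoc matrix_inv_mult assms)

lemma proj_act_abs:
  assumes "invertible (P::complex^'n^'n)" "v \<noteq> 0"
  shows "proj_act P (abs_cproj v) = abs_cproj (P *v v)"
proof -
  obtain c where c: "c \<noteq> 0" "rep_cproj (abs_cproj v) = c *s v"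
    using abs_cproj_eq_iff[OF assms(2) rep_cproj_nonzero] abs_rep_cproj by metis
  show ?thesis
    unfolding proj_act_def c(2) vector_scalar_commute
    using abs_cproj_smult[OF invertible_mv_nonzero[OF assms] c(1)] .
qed

lemma proj_act_comp:
  assumes "invertible (A::complex^'n^'n)" "invertible B"
  shows "proj_act A (proj_act B x) = proj_act (A ** B) x"
proof -
  have x: "x = abs_cproj (rep_cproj x)" by (simp add: abs_rep_cproj)
  show ?thesis
    by (subst (1 2) x) (use assms rep_cproj_nonzero[of x] invertible_mv_nonzero[OF assms(2)] in
      \<open>simp add: proj_act_abs invertible_mult matrix_vector_mul_assoc\<close>)
qed

lemma proj_act_id: "proj_act (mat 1) x = x"
  unfolding proj_act_def by (simp add: abs_rep_cproj)

lemma proj_act_intertwine: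
  assumes "invertible (A::complex^'n^'n)" "invertible B" "invertible M" "c \<noteq> 0"
    and "\<And>w. B *v (M *v w) = c *s (M *v (A *v w))"
  shows "proj_act M (proj_act A x) = proj_act B (proj_act M x)"
proof -
  define w where "w = rep_cproj x"
  have x: "x = abs_cproj w" and w: "w \<noteq> 0" by (simp_all add: w_def abs_rep_cproj rep_cproj_nonzero)
  have "proj_act M (proj_act A x) = abs_cproj (M *v (A *v w))"
    using x w assms(1,3) by (simp add: proj_act_abs invertible_mv_nonzero)
  also have "\<dots> = abs_cproj (B *v (M *v w))"
    using assms w by (simp add: abs_cproj_smult invertible_mv_nonzero)
  also have "\<dots> = proj_act B (proj_act M x)"
    using x w assms(2,3) by (simp add: proj_act_abs invertible_mv_nonzero)
  finally show ?thesis .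
qed

lemma bounded_linear_mv: "bounded_linear (\<lambda>x. (A::complex^'n^'m) *v x)"
  using linear_conv_bounded_linear matrix_vector_mul_linear by blast

lemma bounded_linear_smult_left: "bounded_linear (\<lambda>t::complex. t *s (u::complex^'n))"
  unfolding linear_conv_bounded_linear[symmetric]
  by (rule linearI) (simp_all add: vec_eq_iff algebra_simps)

lemma bounded_linear_smult_right: "bounded_linear (\<lambda>z::complex^'n. c *s z)"
  unfolding linear_conv_bounded_linear[symmetric]
  by (rule linearI) (simp_all add: vec_eq_iff algebra_simps)

lemma proj_holomorphic_proj_act:
  assumes "invertible (M::complex^'n^'n)"
  shows "proj_holomorphic (proj_act M)"
  unfolding proj_holomorphic_def
proof (intro allI impI exI conjI)
  fix v :: "complex^'n" assume "v \<noteq> 0"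
  then show "v \<in> UNIV - {0}" "0 \<notin> UNIV - {0::complex^'n}" by auto
  show "open (UNIV - {0::complex^'n})" by (simp add: open_delete)
  show "cholo_on ((*v) M) (UNIV - {0})"
    unfolding cholo_on_def
    using bounded_linear_imp_has_derivative[OF bounded_linear_mv[of M]] vector_scalar_commute
    by blast
  show "\<forall>w\<in>UNIV - {0}. M *v w \<noteq> 0 \<and> abs_cproj (M *v w) = proj_act M (abs_cproj w)"
    using assms by (auto simp: invertible_mv_nonzero proj_act_abs)
qed

lemma proj_biholomorphic_proj_act:
  assumes "invertible (M::complex^'n^'n)"
  shows "proj_biholomorphic (proj_act M)"
proof -
  let ?N = "matrix_inv M"
  have N: "invertible ?N" using matrix_inv_invertible[OF assms] .
  have left: "proj_act ?N (proj_act M x) = x" for x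
    using proj_act_comp[OF N assms] matrix_inv_mult[OF assms] proj_act_id by simp
  have right: "proj_act M (proj_act ?N x) = x" for x
    using proj_act_comp[OF assms N] matrix_inv_mult[OF assms] proj_act_id by simp
  have "bij (proj_act M)" by (rule o_bij[of "proj_act ?N"]) (auto simp: left right fun_eq_iff)
  moreover have "inv (proj_act M) = proj_act ?N" by (rule inv_equality) (auto simp: left right)
  ultimately show ?thesis
    unfolding proj_biholomorphic_def
    using proj_holomorphic_proj_act[OF assms] proj_holomorphic_proj_act[OF N] by simp
qed

lemma diag_mat_mv: "diag_mat d *v x = (\<chi> i. d i * x $ i)"
proof -
  have "(\<Sum>j\<in>UNIV. (if i = j then d i else 0) * x $ j) = d i * x $ i" for i
    by (simp add: if_distrib[of "\<lambda>a. a * _"] cong: if_cong)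
  then show ?thesis by (simp add: diag_mat_def matrix_vector_mult_def vec_eq_iff)
qed

lemma diag_mat_invertible:
  assumes "\<forall>k. d k \<noteq> 0"
  shows "invertible (diag_mat d)"
proof -
  have "diag_mat d ** diag_mat (\<lambda>k. inverse (d k)) = mat 1"
    using assms by (simp add: diag_mat_def matrix_matrix_mult_def mat_def vec_eq_iff
        if_distrib[of "\<lambda>a. a * _"] cong: if_cong)
  then show ?thesis using invertible_right_inverse by blast
qed

lemma conj_diag_invertible:
  assumes "invertible (S::complex^'n^'n)" "\<forall>k. d k \<noteq> 0"
  shows "invertible (S ** diag_mat d ** matrix_inv S)"
  using assms diag_mat_invertible matrix_inv_invertible by (blast intro: invertible_mult)

lemma conj_diag_mv:
  assumes "invertible (S::complex^'n^'n)"
  shows "matrix_inv S *v ((S ** D ** matrix_inv S) *v w) = D *v (matrix_inv S *v w)"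
  by (simp add: matrix_vector_mul_assoc[symmetric] matrix_inv_mv assms)

lemma conj_diag_eigen:
  assumes "invertible (S::complex^'n^'n)"
  shows "(S ** diag_mat d ** matrix_inv S) *v (S *v axis k 1) = d k *s (S *v axis k 1)"
proof -
  have "diag_mat d *v axis k 1 = d k *s axis k 1" by (simp add: diag_mat_mv vec_eq_iff axis_def)
  then show ?thesis
    by (simp add: matrix_vector_mul_assoc[symmetric] matrix_inv_mv assms vector_scalar_commute)
qed

lemma vector_supported_axis: "\<forall>i. i \<noteq> j \<longrightarrow> (z::complex^'n) $ i = 0 \<Longrightarrow> z = z $ j *s axis j 1"
  by (auto simp: vec_eq_iff axis_def)

lemma conj_diag_eigenvector:
  assumes T: "invertible (T::complex^'n^'n)" and "inj d"
    and eig: "(T ** diag_mat d ** matrix_inv T) *v u = c *s u" and "u \<noteq> 0"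
  shows "\<exists>j y. y \<noteq> 0 \<and> u = y *s (T *v axis j 1)"
proof -
  define z where "z = matrix_inv T *v u"
  have dz: "d i * z $ i = c * z $ i" for i
  proof -
    have "diag_mat d *v z = c *s z"
      using conj_diag_mv[OF T, of "diag_mat d" u] eig by (simp add: z_def vector_scalar_commute)
    then show ?thesis by (simp add: diag_mat_mv vec_eq_iff)
  qed
  have "z \<noteq> 0" using \<open>u \<noteq> 0\<close> matrix_inv_mv(2)[OF T, of u] by (auto simp: z_def)
  then obtain j where zj: "z $ j \<noteq> 0" by (metis vec_eq_iff zero_index)
  have "z $ i = 0" if "i \<noteq> j" for i
    using dz[of i] dz[of j] zj injD[OF \<open>inj d\<close>, of i j] that by auto
  then have "z = z $ j *s axis j 1" by (intro vector_supported_axis) auto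
  then have "u = z $ j *s (T *v axis j 1)"
    using matrix_inv_mv(2)[OF T, of u] by (metis z_def vector_scalar_commute)
  then show ?thesis using zj by blast
qed

definition perm_mat :: "('n::finite \<Rightarrow> 'n) \<Rightarrow> complex^'n^'n" where
  "perm_mat \<rho> = (\<chi> i j. if i = \<rho> j then 1 else 0)"

lemma perm_mat_mv:
  assumes "\<rho> permutes (UNIV::'n::finite set)"
  shows "perm_mat \<rho> *v z = (\<chi> i. z $ inv \<rho> i)"
proof -
  have "(i = \<rho> j) = (j = inv \<rho> i)" for i j
    using permutes_inverses[OF assms] by metis
  then show ?thesis
    by (simp add: perm_mat_def matrix_vector_mult_def vec_eq_iff if_distrib[of "\<lambda>a. a * _"]
        cong: if_cong)
qed

lemma perm_mat_invertible:
  assumes "\<rho> permutes (UNIV::'n::finite set)"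
  shows "invertible (perm_mat \<rho>)"
  unfolding invertible_eq_bij perm_mat_mv[OF assms, abs_def]
  by (rule o_bij[of "\<lambda>z. \<chi> k. z $ \<rho> k"])
    (use permutes_inverses[OF assms] in \<open>auto simp: fun_eq_iff vec_eq_iff\<close>)

lemma diag_perm_intertwine:
  assumes "\<rho> permutes (UNIV::'n::finite set)" "\<And>k. q (\<rho> k) = c * p k"
  shows "diag_mat q *v (perm_mat \<rho> *v z) = c *s (perm_mat \<rho> *v (diag_mat p *v z))"
  using assms(2)[of "inv \<rho> _"] permutes_inverses[OF assms(1)]
  by (simp add: perm_mat_mv[OF assms(1)] diag_mat_mv vec_eq_iff)

section \<open>Backward direction\<close>

lemma matched_eigenvalues_conjugate:
  fixes S T :: "complex^'n::finite^'n" and p q :: "'i \<Rightarrow> 'n \<Rightarrow> complex"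
  assumes S: "invertible S" and T: "invertible T"
    and nz: "\<forall>r\<in>I. \<forall>k. p r k \<noteq> 0 \<and> q r k \<noteq> 0"
    and \<rho>: "\<rho> permutes (UNIV::'n set)"
    and ratio: "\<forall>r\<in>I. \<forall>k. k \<noteq> m \<longrightarrow> q r (\<rho> k) / q r (\<rho> m) = p r k / p r m"
  shows "\<exists>f::'n cproj \<Rightarrow> 'n cproj. proj_biholomorphic f \<and>
            (\<forall>r\<in>I. \<forall>v. f (proj_act (S ** diag_mat (p r) ** matrix_inv S) v)
                        = proj_act (T ** diag_mat (q r) ** matrix_inv T) (f v))"
proof -
  define M where "M = T ** perm_mat \<rho> ** matrix_inv S"
  have M: "invertible M"
    unfolding M_def using S T perm_mat_invertible[OF \<rho>] matrix_inv_invertible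
    by (blast intro: invertible_mult)
  show ?thesis
  proof (intro exI conjI ballI allI)
    show "proj_biholomorphic (proj_act M)" by (rule proj_biholomorphic_proj_act[OF M])
    fix r x assume r: "r \<in> I"
    define c where "c = q r (\<rho> m) / p r m"
    have "q r (\<rho> k) = c * p r k" for k
      using ratio r nz by (cases "k = m") (auto simp: c_def field_simps)
    note intertwine = diag_perm_intertwine[where q = "q r" and p = "p r", OF \<rho> this]
    show "proj_act M (proj_act (S ** diag_mat (p r) ** matrix_inv S) x)
        = proj_act (T ** diag_mat (q r) ** matrix_inv T) (proj_act M x)"
    proof (rule proj_act_intertwine)
      show "invertible (S ** diag_mat (p r) ** matrix_inv S)"
        "invertible (T ** diag_mat (q r) ** matrix_inv T)"
        using conj_diag_invertible S T nz r by auto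
      show "c \<noteq> 0" using nz r by (simp add: c_def)
      show "(T ** diag_mat (q r) ** matrix_inv T) *v (M *v w)
          = c *s (M *v ((S ** diag_mat (p r) ** matrix_inv S) *v w))" for w
        using intertwine[of "matrix_inv S *v w"]
        by (simp add: M_def matrix_vector_mul_assoc[symmetric] matrix_inv_mv S T
            vector_scalar_commute)
    qed (rule M)
  qed
qed

section \<open>Differentiating a parallelism relation\<close>

lemma derivative_locally_zero:
  assumes "open W" "x \<in> W" "\<forall>w\<in>W. g w = 0" "(g has_derivative D) (at x)"
  shows "D h = 0"
proof -
  have "(g has_derivative (\<lambda>_. 0)) (at x)"
    by (rule has_derivative_transform_within_open[OF _ assms(1,2)]) (use assms(3) in auto)
  then show ?thesis using has_derivative_unique[OF assms(4)] by metis
qed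

text \<open>If Y(w) stays parallel to X(w) near v and Y(v) = b X(v) \<noteq> 0, then the derivatives
  satisfy Y'(h) - b X'(h) \<in> span X(v): the 2x2 minors of (X, Y) vanish identically.\<close>
lemma parallel_maps_derivative:
  fixes X Y :: "'a::real_normed_vector \<Rightarrow> complex^'b"
  assumes W: "open W" "v \<in> W" and par: "\<forall>w\<in>W. \<exists>c. Y w = c *s X w"
    and dX: "(X has_derivative DX) (at v)" and dY: "(Y has_derivative DY) (at v)"
    and Xv: "X v \<noteq> 0" and Yv: "Y v = b *s X v"
  shows "\<exists>\<mu>. DY h - b *s DX h = \<mu> *s X v"
proof -
  define z where "z = DY h - b *s DX h"
  have coord: "((\<lambda>w. Z w $ i) has_derivative (\<lambda>h. DZ h $ i)) (at v)"
    if "(Z has_derivative DZ) (at v)" for Z :: "'a \<Rightarrow> complex^'b" and DZ i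
    using bounded_linear.has_derivative[OF bounded_linear_vec_nth that] .
  have minor: "X v $ i * z $ l = X v $ l * z $ i" for i l
  proof -
    have d: "((\<lambda>w. X w $ i * Y w $ l - X w $ l * Y w $ i) has_derivative
       (\<lambda>h. (X v $ i * DY h $ l + DX h $ i * Y v $ l) - (X v $ l * DY h $ i + DX h $ l * Y v $ i)))
       (at v)"
      by (intro has_derivative_diff has_derivative_mult coord dX dY)
    have "\<forall>w\<in>W. X w $ i * Y w $ l - X w $ l * Y w $ i = 0"
    proof
      fix w assume "w \<in> W"
      then obtain c where "Y w = c *s X w" using par by blast
      then show "X w $ i * Y w $ l - X w $ l * Y w $ i = 0" by simp
    qed
    from derivative_locally_zero[OF W this d]
    have "(X v $ i * DY h $ l + DX h $ i * Y v $ l) - (X v $ l * DY h $ i + DX h $ l * Y v $ i) = 0" .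
    then show ?thesis
      unfolding z_def Yv by (simp add: algebra_simps)
  qed
  obtain i where i: "X v $ i \<noteq> 0" using Xv by (metis vec_eq_iff zero_index)
  have "z = (z $ i / X v $ i) *s X v"
    using minor[of i] i by (simp add: vec_eq_iff field_simps)
  then show ?thesis unfolding z_def by blast
qed

section \<open>Holomorphic lifts\<close>

definition local_lift ::
  "('n::finite cproj \<Rightarrow> 'n cproj) \<Rightarrow> complex^'n \<Rightarrow> (complex^'n \<Rightarrow> complex^'n)
     \<Rightarrow> (complex^'n \<Rightarrow> complex^'n) \<Rightarrow> bool" where
  "local_lift f v F L \<longleftrightarrow>
     (\<exists>U. open U \<and> v \<in> U \<and> (\<forall>w\<in>U. w \<noteq> 0 \<and> F w \<noteq> 0 \<and> abs_cproj (F w) = f (abs_cproj w)))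
     \<and> (F has_derivative L) (at v) \<and> (\<forall>c x. L (c *s x) = c *s L x)"

lemma proj_holomorphic_local_lift:
  assumes "proj_holomorphic f" "v \<noteq> 0"
  shows "\<exists>F L. local_lift f v F L"
proof -
  obtain U F where U: "open U" "v \<in> U" "0 \<notin> U" "cholo_on F U"
    and FU: "\<forall>w\<in>U. F w \<noteq> 0 \<and> abs_cproj (F w) = f (abs_cproj w)"
    using assms unfolding proj_holomorphic_def by blast
  obtain L where "(F has_derivative L) (at v)" "\<forall>c x. L (c *s x) = c *s L x"
    using U unfolding cholo_on_def by blast
  then have "local_lift f v F L"
    unfolding local_lift_def using U FU by (metis (full_types))
  then show ?thesis by blast
qed

lemma lift_linearized_conjugacy:
  fixes P Q :: "complex^'n::finite^'n"
  assumes P: "invertible P" and Q: "invertible Q"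
    and conj: "\<forall>x. f (proj_act P x) = proj_act Q (f x)"
    and lift: "local_lift f v F L"
    and Pv: "P *v v = a *s v" "a \<noteq> 0" and Qu: "Q *v F v = b *s F v"
    and Ph: "P *v h = \<theta> *s h"
  shows "\<exists>\<mu>. Q *v L h - (b * \<theta> / a) *s L h = \<mu> *s F v"
proof -
  obtain U where U: "open U" "v \<in> U"
    and FU: "\<forall>w\<in>U. w \<noteq> 0 \<and> F w \<noteq> 0 \<and> abs_cproj (F w) = f (abs_cproj w)"
    and dF: "(F has_derivative L) (at v)" and hom: "\<forall>c x. L (c *s x) = c *s L x"
    using lift unfolding local_lift_def by blast
  define Pa where "Pa w = (1 / a) *s (P *v w)" for w
  have Pa_bl: "bounded_linear Pa"
    unfolding Pa_def using bounded_linear_compose[OF bounded_linear_smult_right bounded_linear_mv] .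
  have Pav: "Pa v = v" using Pv by (simp add: Pa_def vector_smult_assoc)
  define W where "W = U \<inter> Pa -` U"
  have W: "open W" "v \<in> W"
    unfolding W_def using U Pav
    by (auto intro!: open_Int continuous_open_vimage linear_continuous_at Pa_bl)
  have par: "\<forall>w\<in>W. \<exists>c. Q *v F w = c *s F (Pa w)"
  proof
    fix w assume "w \<in> W"
    then have w: "w \<in> U" "Pa w \<in> U" unfolding W_def by auto
    have Pw: "P *v w \<noteq> 0" using invertible_mv_nonzero[OF P] FU w by blast
    have Fw: "F w \<noteq> 0" "abs_cproj (F w) = f (abs_cproj w)" using FU w by auto
    have "abs_cproj (F (Pa w)) = f (abs_cproj (P *v w))"
      using FU w Pv(2) abs_cproj_smult[OF Pw] by (simp add: Pa_def)
    also have "\<dots> = f (proj_act P (abs_cproj w))" using proj_act_abs[OF P] FU w by simp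
    also have "\<dots> = proj_act Q (abs_cproj (F w))" using conj Fw by simp
    also have "\<dots> = abs_cproj (Q *v F w)" using proj_act_abs[OF Q Fw(1)] .
    finally show "\<exists>c. Q *v F w = c *s F (Pa w)"
      using abs_cproj_parallel invertible_mv_nonzero[OF Q Fw(1)] FU w by blast
  qed
  have dX: "((\<lambda>w. F (Pa w)) has_derivative (\<lambda>h. L (Pa h))) (at v)"
  proof -
    have "(F has_derivative L) (at (Pa v))" using dF Pav by simp
    from has_derivative_compose[OF bounded_linear_imp_has_derivative[OF Pa_bl] this]
    show ?thesis .
  qed
  have dY: "((\<lambda>w. Q *v F w) has_derivative (\<lambda>h. Q *v L h)) (at v)"
    by (rule bounded_linear.has_derivative[OF bounded_linear_mv dF])
  have "F (Pa v) \<noteq> 0" "Q *v F v = b *s F (Pa v)" using FU U Qu Pav by auto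
  from parallel_maps_derivative[OF W par dX dY this]
  obtain \<mu> where "Q *v L h - b *s L (Pa h) = \<mu> *s F v" using Pav by auto
  moreover have "L (Pa h) = (\<theta> / a) *s L h" using hom Ph by (simp add: Pa_def vector_smult_assoc)
  ultimately show ?thesis by (auto simp: vector_smult_assoc)
qed

text \<open>For a biholomorphism, the derivative of a lift is injective modulo the fibre
  direction: L(h) \<in> span F(v) forces h \<in> span v (the lift of inv f undoes L).\<close>
lemma lift_derivative_fibre:
  assumes bh: "proj_biholomorphic f" and lift: "local_lift f v F L"
    and Lh: "L h = \<gamma> *s F v"
  shows "\<exists>\<mu>. h = \<mu> *s v"
proof -
  obtain U where U: "open U" "v \<in> U"
    and FU: "\<forall>w\<in>U. w \<noteq> 0 \<and> F w \<noteq> 0 \<and> abs_cproj (F w) = f (abs_cproj w)"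
    and dF: "(F has_derivative L) (at v)"
    using lift unfolding local_lift_def by blast
  define u where "u = F v"
  have v0: "v \<noteq> 0" and u0: "u \<noteq> 0" and fu: "abs_cproj u = f (abs_cproj v)"
    using FU U unfolding u_def by auto
  have invf: "inv f (f x) = x" for x using bh by (simp add: proj_biholomorphic_def bij_is_inj)
  obtain G LG where "local_lift (inv f) u G LG"
    using proj_holomorphic_local_lift bh u0 unfolding proj_biholomorphic_def by blast
  then obtain UG where UG: "open UG" "u \<in> UG"
    and GU: "\<forall>w\<in>UG. w \<noteq> 0 \<and> G w \<noteq> 0 \<and> abs_cproj (G w) = inv f (abs_cproj w)"
    and dG: "(G has_derivative LG) (at u)" and hom: "\<forall>c x. LG (c *s x) = c *s LG x"
    unfolding local_lift_def by blast
  obtain c0 where c0: "G u = c0 *s v"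
    using abs_cproj_parallel[of v "G u"] GU UG fu invf v0 by auto
  have "c0 \<noteq> 0" using c0 GU UG by auto
  \<comment> \<open>G \<circ> F is parallel to the identity near v\<close>
  obtain \<mu>1 where \<mu>1: "LG (L h) - c0 *s h = \<mu>1 *s v"
  proof -
    obtain S0 where S0: "open S0" "v \<in> S0" "\<forall>x\<in>S0. F x \<in> UG"
      using continuous_at_open[of v F] has_derivative_continuous[OF dF] UG u_def by metis
    have W: "open (S0 \<inter> U)" "v \<in> S0 \<inter> U" using S0 U by auto
    have par: "\<forall>w\<in>S0 \<inter> U. \<exists>c. G (F w) = c *s w"
    proof
      fix w assume w: "w \<in> S0 \<inter> U"
      then have Fw: "F w \<in> UG" "abs_cproj (F w) = f (abs_cproj w)" using FU S0 by auto
      then have "abs_cproj w = abs_cproj (G (F w))" using GU invf by simp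
      then show "\<exists>c. G (F w) = c *s w" using abs_cproj_parallel GU FU w Fw(1) by blast
    qed
    have "(G has_derivative LG) (at (F v))" using dG u_def by simp
    from has_derivative_compose[OF dF this]
    have dGF: "((\<lambda>w. G (F w)) has_derivative (\<lambda>h. LG (L h))) (at v)" .
    have "G (F v) = c0 *s v" using c0 u_def by simp
    from parallel_maps_derivative[where X = "\<lambda>w. w", OF W par has_derivative_ident dGF v0 this]
    show thesis using that by blast
  qed
  \<comment> \<open>G is parallel to v along the line through u\<close>
  obtain \<mu>2 where \<mu>2: "LG u = \<mu>2 *s v"
  proof -
    define W where "W = (UNIV - {0::complex}) \<inter> (\<lambda>t. t *s u) -` UG"
    have W: "open W" "1 \<in> W" unfolding W_def using UG
      by (auto intro!: open_Int continuous_open_vimage linear_continuous_at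
          bounded_linear_smult_left open_delete)
    have par: "\<forall>t\<in>W. \<exists>c. G (t *s u) = c *s v"
    proof
      fix t assume "t \<in> W"
      then have t: "t \<noteq> 0" "t *s u \<in> UG" unfolding W_def by auto
      then have "abs_cproj v = abs_cproj (G (t *s u))"
        using GU abs_cproj_smult[OF u0 t(1)] fu invf by simp
      then show "\<exists>c. G (t *s u) = c *s v" using abs_cproj_parallel GU t(2) v0 by blast
    qed
    have "(G has_derivative LG) (at (1 *s u))" using dG by simp
    from has_derivative_compose[OF bounded_linear_imp_has_derivative[OF
          bounded_linear_smult_left] this]
    have dGline: "((\<lambda>t. G (t *s u)) has_derivative (\<lambda>t. LG (t *s u))) (at 1)" .
    have "G (1 *s u) = c0 *s v" using c0 by simp
    from parallel_maps_derivative[where X = "\<lambda>_. v", OF W par has_derivative_const dGline v0 this]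
    obtain \<mu> where "LG (1 *s u) - c0 *s 0 = \<mu> *s v" by blast
    then show thesis using that[of \<mu>] by simp
  qed
  have "c0 *s h = LG (L h) - \<mu>1 *s v" using \<mu>1 by (simp add: algebra_simps)
  also have "\<dots> = (\<gamma> * \<mu>2 - \<mu>1) *s v"
    using \<mu>2 hom Lh by (simp add: u_def vector_smult_assoc vector_sub_rdistrib)
  finally have "h = ((\<gamma> * \<mu>2 - \<mu>1) / c0) *s v"
    using \<open>c0 \<noteq> 0\<close> by (simp add: vec_eq_iff field_simps)
  then show ?thesis by blast
qed

section \<open>Forward direction\<close>

lemma simple_family_inj:
  assumes simple: "simple_family (\<lambda>k. Ln (d k / d m)) (UNIV - {m})"
    and nz: "\<forall>k. d k \<noteq> (0::complex)"
  shows "inj d"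
proof (rule injI, rule ccontr)
  fix k l assume e: "d k = d l" and "k \<noteq> l"
  have Ln_nz: "k \<noteq> m \<Longrightarrow> Ln (d k / d m) \<noteq> 0" for k
    using simple unfolding simple_family_def by auto
  show False
  proof (cases "k = m \<or> l = m")
    case True
    then obtain a where "a \<noteq> m" "d a = d m" using e \<open>k \<noteq> l\<close> by metis
    then show ?thesis using Ln_nz[of a] nz by simp
  next
    case False
    then have "Ln (d k / d m) / Ln (d l / d m) \<noteq> of_nat 1"
      using simple \<open>k \<noteq> l\<close> unfolding simple_family_def by blast
    then show ?thesis using e Ln_nz False by simp
  qed
qed

lemma conjugacy_matches_eigenvalues:
  fixes S T :: "complex^'n::finite^'n" and p q :: "'i \<Rightarrow> 'n \<Rightarrow> complex"
  assumes S: "invertible S" and T: "invertible T"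
    and nz: "\<forall>r\<in>I. \<forall>k. p r k \<noteq> 0 \<and> q r k \<noteq> 0"
    and r0: "r0 \<in> I" and distinct: "inj (q r0)"
    and bh: "proj_biholomorphic f"
    and conj: "\<forall>r\<in>I. \<forall>x. f (proj_act (S ** diag_mat (p r) ** matrix_inv S) x)
                        = proj_act (T ** diag_mat (q r) ** matrix_inv T) (f x)"
  shows "\<exists>j. \<forall>k. k \<noteq> m \<longrightarrow> (\<exists>l. l \<noteq> j \<and> (\<forall>r\<in>I. q r l = q r j * (p r k / p r m)))"
proof -
  define P where "P r = S ** diag_mat (p r) ** matrix_inv S" for r
  define Q where "Q r = T ** diag_mat (q r) ** matrix_inv T" for r
  have PQ: "invertible (P r)" "invertible (Q r)" if "r \<in> I" for r
    unfolding P_def Q_def using conj_diag_invertible S T nz that by auto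
  define v where "v = S *v axis m 1"
  have v0: "v \<noteq> 0" unfolding v_def by (simp add: invertible_mv_nonzero[OF S] axis_eq_0_iff)
  have Peig: "P r *v (S *v axis k 1) = p r k *s (S *v axis k 1)" for r k
    unfolding P_def by (rule conj_diag_eigen[OF S])
  obtain F L where lift: "local_lift f v F L"
    using proj_holomorphic_local_lift bh v0 unfolding proj_biholomorphic_def by blast
  define u where "u = F v"
  have u0: "u \<noteq> 0" and fu: "abs_cproj u = f (abs_cproj v)"
    using lift unfolding local_lift_def u_def by auto
  have conj_PQ: "\<forall>x. f (proj_act (P r) x) = proj_act (Q r) (f x)" if "r \<in> I" for r
    using conj that unfolding P_def Q_def by blast
  \<comment> \<open>[v] is fixed by P r0, hence [u] is fixed by Q r0\<close>
  have "abs_cproj (Q r0 *v u) = abs_cproj u"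
  proof -
    have "proj_act (P r0) (abs_cproj v) = abs_cproj v"
      using proj_act_abs[OF PQ(1)[OF r0] v0] Peig[of r0 m] abs_cproj_smult[OF v0] nz r0
      by (simp add: v_def)
    then have "abs_cproj u = proj_act (Q r0) (abs_cproj u)"
      using conj_PQ[OF r0] fu by metis
    then show ?thesis using proj_act_abs[OF PQ(2)[OF r0] u0] by simp
  qed
  then obtain c where "Q r0 *v u = c *s u"
    using abs_cproj_parallel[of u] u0 invertible_mv_nonzero[OF PQ(2)[OF r0]] by metis
  then obtain j y where y: "y \<noteq> 0" and uy: "u = y *s (T *v axis j 1)"
    using conj_diag_eigenvector[OF T distinct] u0 unfolding Q_def by blast
  have Qu: "Q r *v u = q r j *s u" for r
  proof -
    have "Q r *v u = y *s (q r j *s (T *v axis j 1))"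
      unfolding uy Q_def vector_scalar_commute conj_diag_eigen[OF T] ..
    then show ?thesis by (simp only: uy vector_smult_assoc mult.commute)
  qed
  have Tiu: "matrix_inv T *v u = y *s axis j 1"
    by (simp add: uy vector_scalar_commute matrix_inv_mv[OF T])
  show ?thesis
  proof (rule exI[of _ j], intro allI impI)
    fix k assume "k \<noteq> m"
    define h where "h = S *v axis k 1"
    define z where "z = matrix_inv T *v L h"
    \<comment> \<open>L h is not parallel to u, so z has a nonzero coordinate l \<noteq> j\<close>
    have "\<not> (\<exists>\<mu>. h = \<mu> *s v)"
    proof
      assume "\<exists>\<mu>. h = \<mu> *s v"
      then obtain \<mu> where "S *v axis k 1 = S *v (\<mu> *s axis m 1)"
        by (auto simp: h_def v_def vector_scalar_commute)
      then have "axis k 1 = (\<mu> *s axis m 1 :: complex^'n)"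
        using inj_matrix_vector_mult[OF S] by (simp add: inj_eq)
      then have "axis k 1 $ k = (\<mu> *s axis m 1 :: complex^'n) $ k" by simp
      then show False using \<open>k \<noteq> m\<close> by (simp add: axis_def)
    qed
    then have not_par: "\<not> (\<exists>\<gamma>. L h = \<gamma> *s u)"
      using lift_derivative_fibre[OF bh lift] u_def by blast
    have "\<exists>l. l \<noteq> j \<and> z $ l \<noteq> 0"
    proof (rule ccontr)
      assume "\<nexists>l. l \<noteq> j \<and> z $ l \<noteq> 0"
      then have "z = z $ j *s axis j 1" by (intro vector_supported_axis) blast
      then have "L h = T *v (z $ j *s axis j 1)"
        using matrix_inv_mv(2)[OF T, of "L h"] by (simp add: z_def)
      also have "\<dots> = (z $ j / y) *s u"
        using y by (simp add: uy vector_smult_assoc vector_scalar_commute)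
      finally show False using not_par by blast
    qed
    then obtain l where l: "l \<noteq> j" "z $ l \<noteq> 0" by blast
    \<comment> \<open>the linearised conjugacy, read in coordinate l\<close>
    show "\<exists>l. l \<noteq> j \<and> (\<forall>r\<in>I. q r l = q r j * (p r k / p r m))"
    proof (intro exI[of _ l] conjI ballI l(1))
      fix r assume r: "r \<in> I"
      define \<kappa> where "\<kappa> = q r j * p r k / p r m"
      have "p r m \<noteq> 0" using nz r by simp
      from lift_linearized_conjugacy[OF PQ[OF r] conj_PQ[OF r] lift Peig[of r m, folded v_def]
          this Qu[of r, unfolded u_def] Peig[of r k, folded h_def]]
      obtain \<mu> where "Q r *v L h - \<kappa> *s L h = \<mu> *s u" unfolding \<kappa>_def u_def by blast
      then have "matrix_inv T *v (Q r *v L h - \<kappa> *s L h) = \<mu> *s (y *s axis j 1)"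
        by (simp add: vector_scalar_commute Tiu)
      moreover have "matrix_inv T *v (Q r *v L h - \<kappa> *s L h) = diag_mat (q r) *v z - \<kappa> *s z"
        by (simp add: matrix_vector_mult_diff_distrib vector_scalar_commute conj_diag_mv[OF T]
            Q_def z_def)
      ultimately have "(diag_mat (q r) *v z - \<kappa> *s z) $ l = (\<mu> *s (y *s axis j 1)) $ l" by simp
      then have "(q r l - \<kappa>) * z $ l = 0"
        using l(1) by (simp add: diag_mat_mv axis_def algebra_simps)
      then show "q r l = q r j * (p r k / p r m)" using l(2) by (simp add: \<kappa>_def)
    qed
  qed
qed

lemma matching_permutation:
  fixes p q :: "'i \<Rightarrow> 'n::finite \<Rightarrow> complex"
  assumes r0: "r0 \<in> I" and distinct: "inj (p r0)"
    and nz: "\<forall>r\<in>I. \<forall>k. p r k \<noteq> 0 \<and> q r k \<noteq> 0"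
    and match: "\<forall>k. k \<noteq> m \<longrightarrow> (\<exists>l. l \<noteq> j \<and> (\<forall>r\<in>I. q r l = q r j * (p r k / p r m)))"
  shows "\<exists>\<rho>. \<rho> permutes (UNIV::'n set) \<and>
           (\<forall>r\<in>I. \<forall>k. k \<noteq> m \<longrightarrow> q r (\<rho> k) / q r (\<rho> m) = p r k / p r m)"
proof -
  define \<rho> where "\<rho> k = (if k = m then j
      else (SOME l. l \<noteq> j \<and> (\<forall>r\<in>I. q r l = q r j * (p r k / p r m))))" for k
  have \<rho>m: "\<rho> m = j" by (simp add: \<rho>_def)
  have \<rho>k: "\<rho> k \<noteq> j \<and> (\<forall>r\<in>I. q r (\<rho> k) = q r j * (p r k / p r m))" if "k \<noteq> m" for k
    using someI_ex[OF match[rule_format, OF that]] that by (simp add: \<rho>_def)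
  have "inj \<rho>"
  proof (rule injI)
    fix k k' assume eq: "\<rho> k = \<rho> k'"
    show "k = k'"
    proof (cases "k = m \<or> k' = m")
      case True
      then show ?thesis using eq \<rho>m \<rho>k by metis
    next
      case False
      then have "q r0 j * (p r0 k / p r0 m) = q r0 j * (p r0 k' / p r0 m)"
        using \<rho>k r0 eq by metis
      then have "p r0 k = p r0 k'" using nz r0 by auto
      then show ?thesis using injD[OF distinct] by blast
    qed
  qed
  then have "\<rho> permutes UNIV"
    using finite_UNIV_inj_surj[of \<rho>] by (intro bij_imp_permutes) (auto simp: bij_def)
  moreover have "\<forall>r\<in>I. \<forall>k. k \<noteq> m \<longrightarrow> q r (\<rho> k) / q r (\<rho> m) = p r k / p r m"
    using \<rho>k \<rho>m nz by auto
  ultimately show ?thesis by blast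
qed

theorem theorem6p8:
  fixes S T :: "complex^'n::finite^'n" and m :: 'n and I :: "'i set"
    and p q :: "'i \<Rightarrow> 'n \<Rightarrow> complex"
  assumes "CARD('n) \<ge> 3"
    and "invertible S" and "invertible T"
    and "\<forall>r\<in>I. \<forall>k. p r k \<noteq> 0 \<and> q r k \<noteq> 0"
    and "\<forall>r\<in>I. simple_family (\<lambda>k. Ln (p r k / p r m)) (UNIV - {m})"
    and "\<forall>r\<in>I. simple_family (\<lambda>k. Ln (q r k / q r m)) (UNIV - {m})"
  shows "(\<exists>f::'n cproj \<Rightarrow> 'n cproj. proj_biholomorphic f \<and>
            (\<forall>r\<in>I. \<forall>v. f (proj_act (S ** diag_mat (p r) ** matrix_inv S) v)
                        = proj_act (T ** diag_mat (q r) ** matrix_inv T) (f v)))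
         \<longleftrightarrow> (\<exists>\<rho>. \<rho> permutes (UNIV::'n set) \<and>
                (\<forall>r\<in>I. \<forall>k. k \<noteq> m \<longrightarrow> q r (\<rho> k) / q r (\<rho> m) = p r k / p r m))"
    (is "?conjugate \<longleftrightarrow> ?matched")
proof
  assume ?conjugate
  then obtain f where f: "proj_biholomorphic f"
    "\<forall>r\<in>I. \<forall>v. f (proj_act (S ** diag_mat (p r) ** matrix_inv S) v)
                        = proj_act (T ** diag_mat (q r) ** matrix_inv T) (f v)" by blast
  show ?matched
  proof (cases "I = {}")
    case True
    then show ?thesis by (intro exI[of _ id]) (auto simp: permutes_id)
  next
    case False
    then obtain r0 where r0: "r0 \<in> I" by blast
    have "inj (p r0)" using simple_family_inj[of "p r0" m] assms(4,5) r0 by blast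
    have "inj (q r0)" using simple_family_inj[of "q r0" m] assms(4,6) r0 by blast
    then obtain j where
      "\<forall>k. k \<noteq> m \<longrightarrow> (\<exists>l. l \<noteq> j \<and> (\<forall>r\<in>I. q r l = q r j * (p r k / p r m)))"
      using conjugacy_matches_eigenvalues[OF assms(2-4) r0 _ f] by blast
    then show ?thesis using matching_permutation[OF r0 \<open>inj (p r0)\<close> assms(4)] by blast
  qed
next
  assume ?matched
  then show ?conjugate using matched_eigenvalues_conjugate[OF assms(2-4)] by blast
qed

end
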